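(* Let $q\in\mathrm{prob}(\{0,1\}^2)$. The set $B:=\{(\pi_1,\chi^{(1)}_{1|1},\chi^{(2)}_{1|1}):(\pi,\chi)\in\Theta_2,\ \mu(\pi,\chi)=q\}$ is nonempty and equals the set of all $(\mathrm{Pr},\mathrm{Se}_1,\mathrm{Se}_2)\in[0,1]^3$ satisfying $-q_{10}\le\mathrm{Pr}(\mathrm{Se}_2-\mathrm{Se}_1)\le q_{01}$, $-q_{00}\le\mathrm{Pr}(\mathrm{Se}_1+\mathrm{Se}_2-1)\le q_{11}$, $\mathrm{Pr}-q_{0+}\le\mathrm{Pr}\,\mathrm{Se}_1\le q_{1+}$, and $\mathrm{Pr}-q_{+0}\le\mathrm{Pr}\,\mathrm{Se}_2\le q_{+1}$.
   Context: A subscript $+$ denotes summation over the replaced index, e.g. $q_{0+}=q_{00}+q_{01}$, $q_{+0}=q_{00}+q_{10}$. $\mathrm{prob}(\mathcal{X})$ is the set of probability densities on a finite set $\mathcal{X}$; $\mathrm{markov}(\mathcal{X},\mathcal{Y})$ the set of maps $(x,y)\mapsto p_{y|x}$ with $p_{\cdot|x}\in\mathrm{prob}(\mathcal{Y})$. $\Theta_2:=\mathrm{prob}(\{0,1\})\times\mathrm{markov}(\{0,1\},\{0,1\}^2)$, $\mu(\pi,\chi)_j:=\sum_{i=0}^1\pi_i\chi_{j|i}$ for $j\in\{0,1\}^2$, $\chi^{(1)}_{\iota|i}:=\chi_{\iota0|i}+\chi_{\iota1|i}$, $\chi^{(2)}_{\iota|i}:=\chi_{0\iota|i}+\chi_{1\iota|i}$.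 *)

theory Defs
  imports Main "HOL.Real"
begin

definition prob :: "'a set \<Rightarrow> ('a \<Rightarrow> real) set" where
  "prob X = {p. (\<forall>x\<in>X. 0 \<le> p x) \<and> (\<Sum>x\<in>X. p x) = 1}"

text \<open>Markov kernels: chi x y stands for chi_{y|x}.\<close>
definition markov :: "'a set \<Rightarrow> 'b set \<Rightarrow> ('a \<Rightarrow> 'b \<Rightarrow> real) set" where
  "markov X Y = {chi. \<forall>x\<in>X. chi x \<in> prob Y}"

definition Theta2 :: "((nat \<Rightarrow> real) \<times> (nat \<Rightarrow> nat \<times> nat \<Rightarrow> real)) set" where
  "Theta2 = prob {0,1} \<times> markov {0,1} ({0,1} \<times> {0,1})"

definition mu :: "(nat \<Rightarrow> real) \<Rightarrow> (nat \<Rightarrow> nat \<times> nat \<Rightarrow> real) \<Rightarrow> nat \<times> nat \<Rightarrow> real" where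
  "mu pi chi j = (\<Sum>i\<in>{0,1}. pi i * chi i j)"

text \<open>chi1 chi l i = chi^(1)_{l|i}, chi2 chi l i = chi^(2)_{l|i}.\<close>
definition chi1 :: "(nat \<Rightarrow> nat \<times> nat \<Rightarrow> real) \<Rightarrow> nat \<Rightarrow> nat \<Rightarrow> real" where
  "chi1 chi l i = chi i (l,0) + chi i (l,1)"

definition chi2 :: "(nat \<Rightarrow> nat \<times> nat \<Rightarrow> real) \<Rightarrow> nat \<Rightarrow> nat \<Rightarrow> real" where
  "chi2 chi l i = chi i (0,l) + chi i (1,l)"

end

theory Submission imports Defs begin

(*
  A parameter (pi, chi) fitting q is the same as a splitting of the 2x2 table q into a
  "diseased" part a = pi_1 chi_{.|1} and a "healthy" part q - a = pi_0 chi_{.|0}, both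
  nonnegative; conversely every such a with total Pr and margins Pr Se_1, Pr Se_2 is realised by
  normalising a and q - a. With its margins fixed, a has the single free entry t = a_11, and the
  bounds 0 <= a <= q become four lower and four upper bounds on t. A feasible t exists iff every
  lower bound is below every upper bound; these sixteen comparisons are exactly the stated
  inequalities together with 0 <= Pr Se_i <= Pr.
*)

lemma sum_square:
  "(\<Sum>j\<in>{0::nat,1} \<times> {0::nat,1}. f j) = f (0,0) + f (0,1) + f (1,0) + (f (1,1) :: 'a::comm_monoid_add)"
proof -
  have "{0::nat,1} \<times> {0::nat,1} = {(0,0),(0,1),(1,0),(1,1)}" by auto
  then show ?thesis by (simp add: add.assoc)
qed

lemma ball_square:
  "(\<forall>j\<in>{0::nat,1} \<times> {0::nat,1}. P j) \<longleftrightarrow> P (0,0) \<and> P (0,1) \<and> P (1,0) \<and> P (1,1)"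
  by auto

lemma prob_two_iff: "p \<in> prob {0::nat,1} \<longleftrightarrow> 0 \<le> p 0 \<and> 0 \<le> p 1 \<and> p 0 + p 1 = 1"
  by (simp add: prob_def)

lemma prob_square_iff:
  fixes p :: "nat \<times> nat \<Rightarrow> real"
  shows "p \<in> prob ({0::nat,1} \<times> {0,1}) \<longleftrightarrow>
     0 \<le> p (0,0) \<and> 0 \<le> p (0,1) \<and> 0 \<le> p (1,0) \<and> 0 \<le> p (1,1) \<and>
     p (0,0) + p (0,1) + p (1,0) + p (1,1) = 1"
  unfolding prob_def mem_Collect_eq sum_square ball_square by auto

lemma scaled_in_prob_square:
  fixes f :: "nat \<times> nat \<Rightarrow> real"
  assumes "0 \<le> f (0,0)" "0 \<le> f (0,1)" "0 \<le> f (1,0)" "0 \<le> f (1,1)"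
    and "f (0,0) + f (0,1) + f (1,0) + f (1,1) = c" and "0 < c"
  shows "(\<lambda>j. f j / c) \<in> prob ({0,1} \<times> {0,1})"
  unfolding prob_square_iff using assms by (simp add: add_divide_distrib[symmetric])

definition bernoulli_pair :: "real \<Rightarrow> real \<Rightarrow> nat \<times> nat \<Rightarrow> real" where
  "bernoulli_pair s1 s2 =
     (\<lambda>(i, j). (if i = 1 then s1 else 1 - s1) * (if j = 1 then s2 else 1 - s2))"

lemma bernoulli_pair_in_prob_square:
  assumes "s1 \<in> {0..1}" "s2 \<in> {0..1}"
  shows "bernoulli_pair s1 s2 \<in> prob ({0,1} \<times> {0,1})"
  using assms mult_nonneg_nonneg[of "1 - s1" "1 - s2"]
    mult_left_le[of s2 s1] mult_left_le_one_le[of s2 s1]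
  unfolding prob_square_iff by (auto simp: bernoulli_pair_def algebra_simps)

lemma bernoulli_pair_margins:
  "bernoulli_pair s1 s2 (1,0) + bernoulli_pair s1 s2 (1,1) = s1"
  "bernoulli_pair s1 s2 (0,1) + bernoulli_pair s1 s2 (1,1) = s2"
  by (simp_all add: bernoulli_pair_def algebra_simps)

definition sub_table :: "(nat \<times> nat \<Rightarrow> real) \<Rightarrow> (nat \<times> nat \<Rightarrow> real) \<Rightarrow> bool" where
  "sub_table q a \<longleftrightarrow> (\<forall>j\<in>{0,1} \<times> {0,1}. 0 \<le> a j \<and> a j \<le> q j)"

definition margins :: "(nat \<times> nat \<Rightarrow> real) \<Rightarrow> real \<times> real \<times> real" where
  "margins a = (a (0,0) + a (0,1) + a (1,0) + a (1,1), a (1,0) + a (1,1), a (0,1) + a (1,1))"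

lemma sub_table_iff:
  "sub_table q a \<longleftrightarrow>
     0 \<le> a (0,0) \<and> a (0,0) \<le> q (0,0) \<and> 0 \<le> a (0,1) \<and> a (0,1) \<le> q (0,1) \<and>
     0 \<le> a (1,0) \<and> a (1,0) \<le> q (1,0) \<and> 0 \<le> a (1,1) \<and> a (1,1) \<le> q (1,1)"
  by (auto simp: sub_table_def)

lemma exists_sub_table_with_margins_iff:
  fixes q :: "nat \<times> nat \<Rightarrow> real" and T X1 X2 :: real
  assumes q: "0 \<le> q (0,0)" "0 \<le> q (0,1)" "0 \<le> q (1,0)" "0 \<le> q (1,1)"
  shows "(\<exists>a. sub_table q a \<and> margins a = (T, X1, X2)) \<longleftrightarrow>
    0 \<le> X1 \<and> X1 \<le> T \<and> 0 \<le> X2 \<and> X2 \<le> T \<and>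
    - q (1,0) \<le> X2 - X1 \<and> X2 - X1 \<le> q (0,1) \<and>
    - q (0,0) \<le> X1 + X2 - T \<and> X1 + X2 - T \<le> q (1,1) \<and>
    T - (q (0,0) + q (0,1)) \<le> X1 \<and> X1 \<le> q (1,0) + q (1,1) \<and>
    T - (q (0,0) + q (1,0)) \<le> X2 \<and> X2 \<le> q (0,1) + q (1,1)"
  (is "?table \<longleftrightarrow> ?bounds")
proof
  assume ?table
  then show ?bounds using q by (auto simp: sub_table_iff margins_def)
next
  assume bounds: ?bounds
  define t where "t = max (max 0 (X1 - q (1,0))) (max (X2 - q (0,1)) (X1 + X2 - T))"
  define a where "a = (\<lambda>j :: nat \<times> nat. if j = (1,1) then t else if j = (1,0) then X1 - t
                          else if j = (0,1) then X2 - t else T - X1 - X2 + t)"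
  have "t \<le> q (1,1)" "t \<le> X1" "t \<le> X2" "t \<le> q (0,0) + X1 + X2 - T"
    using bounds q by (simp_all add: t_def)
  moreover have "0 \<le> t" "X1 - q (1,0) \<le> t" "X2 - q (0,1) \<le> t" "X1 + X2 - T \<le> t"
    by (simp_all add: t_def)
  ultimately have "sub_table q a" "margins a = (T, X1, X2)"
    by (auto simp: sub_table_iff margins_def a_def)
  then show ?table by blast
qed

lemma sub_table_of_Theta2:
  assumes fit: "(pi, chi) \<in> Theta2" "\<forall>j\<in>{0,1} \<times> {0,1}. mu pi chi j = q j"
  shows "pi 1 \<in> {0..1}" "chi1 chi 1 1 \<in> {0..1}" "chi2 chi 1 1 \<in> {0..1}"
    and "sub_table q (\<lambda>j. pi 1 * chi 1 j)"
    and "margins (\<lambda>j. pi 1 * chi 1 j) = (pi 1, pi 1 * chi1 chi 1 1, pi 1 * chi2 chi 1 1)"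
proof -
  have pi: "0 \<le> pi 0" "0 \<le> pi 1" "pi 0 + pi 1 = 1"
    using fit(1) unfolding Theta2_def mem_Times_iff fst_conv prob_two_iff by simp_all
  have chi_prob: "chi i \<in> prob ({0,1} \<times> {0,1})" if "i \<in> {0,1}" for i
    using fit(1) that unfolding Theta2_def markov_def by blast
  have weighted_nonneg: "0 \<le> pi i * chi i j" if "i \<in> {0,1}" "j \<in> {0,1} \<times> {0,1}" for i j
    using chi_prob[OF that(1)] that pi unfolding prob_def by auto
  have healthy_part: "q j - pi 1 * chi 1 j = pi 0 * chi 0 j" if "j \<in> {0,1} \<times> {0,1}" for j
    using fit(2) that by (auto simp: mu_def)
  show "sub_table q (\<lambda>j. pi 1 * chi 1 j)"
    unfolding sub_table_def
  proof (intro ballI conjI)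
    fix j :: "nat \<times> nat" assume j: "j \<in> {0,1} \<times> {0,1}"
    show "0 \<le> pi 1 * chi 1 j" using weighted_nonneg[OF _ j] by simp
    show "pi 1 * chi 1 j \<le> q j" using weighted_nonneg[OF _ j, of 0] healthy_part[OF j] by simp
  qed
  have chi: "0 \<le> chi 1 (0,0)" "0 \<le> chi 1 (0,1)" "0 \<le> chi 1 (1,0)" "0 \<le> chi 1 (1,1)"
      "chi 1 (0,0) + chi 1 (0,1) + chi 1 (1,0) + chi 1 (1,1) = 1"
    using chi_prob[of 1] unfolding prob_square_iff by simp_all
  show "pi 1 \<in> {0..1}" using pi by simp
  show "chi1 chi 1 1 \<in> {0..1}" "chi2 chi 1 1 \<in> {0..1}"
    using chi by (auto simp: chi1_def chi2_def)
  have "pi 1 * (chi 1 (0,0) + chi 1 (0,1) + chi 1 (1,0) + chi 1 (1,1)) = pi 1"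
    using chi by simp
  then show "margins (\<lambda>j. pi 1 * chi 1 j) = (pi 1, pi 1 * chi1 chi 1 1, pi 1 * chi2 chi 1 1)"
    by (simp add: margins_def chi1_def chi2_def algebra_simps)
qed

lemma Theta2_of_sub_table:
  assumes q: "q \<in> prob ({0,1} \<times> {0,1})"
    and P: "P \<in> {0..1}" and S: "S1 \<in> {0..1}" "S2 \<in> {0..1}"
    and a: "sub_table q a" "margins a = (P, P * S1, P * S2)"
  obtains pi chi where "(pi, chi) \<in> Theta2" "\<forall>j\<in>{0,1} \<times> {0,1}. mu pi chi j = q j"
    "pi 1 = P" "chi1 chi 1 1 = S1" "chi2 chi 1 1 = S2"
proof -
  have qs: "0 \<le> q (0,0)" "0 \<le> q (0,1)" "0 \<le> q (1,0)" "0 \<le> q (1,1)"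
    "q (0,0) + q (0,1) + q (1,0) + q (1,1) = 1"
    using q unfolding prob_square_iff by auto
  have as: "0 \<le> a (0,0)" "a (0,0) \<le> q (0,0)" "0 \<le> a (0,1)" "a (0,1) \<le> q (0,1)"
    "0 \<le> a (1,0)" "a (1,0) \<le> q (1,0)" "0 \<le> a (1,1)" "a (1,1) \<le> q (1,1)"
    and am: "a (0,0) + a (0,1) + a (1,0) + a (1,1) = P"
      "a (1,0) + a (1,1) = P * S1" "a (0,1) + a (1,1) = P * S2"
    using a by (auto simp: sub_table_iff margins_def)
  text \<open>For P = 0 the kernel at 1 is not constrained by q and is chosen with the prescribed
    margins; for P = 1 the kernel at 0 does not matter.\<close>
  define pi where "pi = (\<lambda>i::nat. if i = 1 then P else 1 - P)"
  define chi where "chi = (\<lambda>i::nat.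
    if i = 1 then (if P = 0 then bernoulli_pair S1 S2 else (\<lambda>j. a j / P))
    else (if P = 1 then q else (\<lambda>j. (q j - a j) / (1 - P))))"
  have "chi 1 \<in> prob ({0,1} \<times> {0,1})"
    using scaled_in_prob_square[of a P] bernoulli_pair_in_prob_square[OF S] as am P
    by (cases "P = 0") (auto simp: chi_def)
  moreover have "chi 0 \<in> prob ({0,1} \<times> {0,1})"
    using scaled_in_prob_square[of "\<lambda>j. q j - a j" "1 - P"] q as am qs P
    by (cases "P = 1") (auto simp: chi_def)
  ultimately have "(pi, chi) \<in> Theta2"
    using P unfolding Theta2_def mem_Times_iff fst_conv snd_conv prob_two_iff markov_def
    by (simp add: pi_def)
  moreover have "mu pi chi j = q j" if "j \<in> {0,1} \<times> {0,1}" for j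
  proof -
    have "a j = 0" if "P = 0" using that \<open>j \<in> _\<close> as am by auto
    moreover have "a j = q j" if "P = 1" using that \<open>j \<in> _\<close> as am qs by auto
    ultimately show ?thesis by (auto simp: mu_def pi_def chi_def field_simps)
  qed
  moreover have "chi1 chi 1 1 = S1" "chi2 chi 1 1 = S2"
    using am bernoulli_pair_margins
    by (auto simp: chi1_def chi2_def chi_def add_divide_distrib[symmetric])
  ultimately show ?thesis using that by (simp add: pi_def)
qed

lemma Theta2_fit_iff:
  assumes "q \<in> prob ({0,1} \<times> {0,1})"
  shows "(\<exists>pi chi. (pi, chi) \<in> Theta2 \<and> (\<forall>j\<in>{0,1} \<times> {0,1}. mu pi chi j = q j) \<and>
            pi 1 = P \<and> chi1 chi 1 1 = S1 \<and> chi2 chi 1 1 = S2) \<longleftrightarrow>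
         P \<in> {0..1} \<and> S1 \<in> {0..1} \<and> S2 \<in> {0..1} \<and>
         (\<exists>a. sub_table q a \<and> margins a = (P, P * S1, P * S2))"
  (is "?fit \<longleftrightarrow> ?table")
proof
  assume ?fit
  then obtain pi chi where fit: "(pi, chi) \<in> Theta2" "\<forall>j\<in>{0,1} \<times> {0,1}. mu pi chi j = q j"
    and "pi 1 = P" "chi1 chi 1 1 = S1" "chi2 chi 1 1 = S2"
    by blast
  with sub_table_of_Theta2[OF fit] show ?table by blast
next
  assume ?table
  then show ?fit using Theta2_of_sub_table[OF assms] by metis
qed

theorem lemma4:
  fixes q :: "nat \<times> nat \<Rightarrow> real"
  assumes "q \<in> prob ({0,1} \<times> {0,1})"
  defines "B \<equiv> {(pi 1, chi1 chi 1 1, chi2 chi 1 1) | pi chi.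
                  (pi, chi) \<in> Theta2 \<and> (\<forall>j\<in>{0,1} \<times> {0,1}. mu pi chi j = q j)}"
  shows "B \<noteq> {} \<and>
    B = {(Pr, Se1, Se2). Pr \<in> {0..1} \<and> Se1 \<in> {0..1} \<and> Se2 \<in> {0..1} \<and>
          - q (1,0) \<le> Pr * (Se2 - Se1) \<and> Pr * (Se2 - Se1) \<le> q (0,1) \<and>
          - q (0,0) \<le> Pr * (Se1 + Se2 - 1) \<and> Pr * (Se1 + Se2 - 1) \<le> q (1,1) \<and>
          Pr - (q (0,0) + q (0,1)) \<le> Pr * Se1 \<and> Pr * Se1 \<le> q (1,0) + q (1,1) \<and>
          Pr - (q (0,0) + q (1,0)) \<le> Pr * Se2 \<and> Pr * Se2 \<le> q (0,1) + q (1,1)}"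
proof -
  have q: "0 \<le> q (0,0)" "0 \<le> q (0,1)" "0 \<le> q (1,0)" "0 \<le> q (1,1)"
    using assms(1) unfolding prob_square_iff by auto
  have B_eq: "B = {(P, S1, S2). \<exists>pi chi. (pi, chi) \<in> Theta2 \<and>
                     (\<forall>j\<in>{0,1} \<times> {0,1}. mu pi chi j = q j) \<and>
                     pi 1 = P \<and> chi1 chi 1 1 = S1 \<and> chi2 chi 1 1 = S2}"
    unfolding B_def by auto
  note characterisation = B_eq Theta2_fit_iff[OF assms(1)] exists_sub_table_with_margins_iff[OF q]
  have "(0, 0, 0) \<in> B"
    unfolding characterisation using q by simp
  moreover have "P * S \<le> P" "0 \<le> P * S" if "P \<in> {0..1}" "S \<in> {0..1}" for P S :: real
    using that by (auto simp: mult_left_le)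
  ultimately show ?thesis
    unfolding characterisation using q by (intro conjI) (blast, auto simp: algebra_simps)
qed

end
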